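(* Let $H$ be a real Hilbert space and $f:H\to\mathbb{R}\cup\{+\infty\}$ a semiconvex function with constant $\alpha>0$ (i.e. $f+\frac\alpha2\|\cdot\|^2$ is convex). Let $r_0>0$ and assume there is $\varphi\in\mathcal{K}(0,r_0)$ such that $\|\partial(\varphi\circ f)(x)\|_-\ge1$ for all $x\in[0<f<r_0]$. Let $\lambda\in(0,\alpha^{-1})$ and let $x\in[0<f<r_0]$ be such that $f(\operatorname{prox}_\lambda x)>0$. Then $$\|\operatorname{prox}_\lambda x-x\|\le\varphi(f(x))-\varphi(f(\operatorname{prox}_\lambda x)).$$
   Context: Semiconvex: proper, lower semicontinuous, and $f+\frac\alpha2\|\cdot\|^2$ convex. $\operatorname{prox}_\lambda(x)$ is the (unique) minimizer of $y\mapsto f(y)+\frac1{2\lambda}\|y-x\|^2$. Fréchet subdifferential: $p\in\partial f(x)$ iff $\liminf_{y\to x,y\ne x}\frac{f(y)-f(x)-\langle p,y-x\rangle}{\|y-x\|}\ge0$ (empty outside the domain); $\|C\|_-=\inf\{\|p\|:p\in C\}$, $+\infty$ if $C=\emptyset$. $\mathcal{K}(0,r_0)$: $\varphi\in C([0,r_0))\cap C^1(0,r_0)$, $\varphi(0)=0$, $\varphi'>0$ on $(0,r_0)$. $[0<f<r_0]=\{x:0<f(x)<r_0\}$. *)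

theory Defs
  imports "HOL-Analysis.Analysis"
begin

text \<open>Extended-valued functions H -> R \<union> {+\<infinity>} are modelled as 'a \<Rightarrow> ereal
  with no value equal to -\<infinity>.\<close>

definition proper_fun :: "('a \<Rightarrow> ereal) \<Rightarrow> bool" where
  "proper_fun f \<longleftrightarrow> (\<forall>x. f x \<noteq> -\<infinity>) \<and> (\<exists>x. f x \<noteq> \<infinity>)"

definition lsc_fun :: "('a::topological_space \<Rightarrow> ereal) \<Rightarrow> bool" where
  "lsc_fun f \<longleftrightarrow> (\<forall>x. f x \<le> Liminf (at x) f)"

definition ereal_convex :: "('a::real_vector \<Rightarrow> ereal) \<Rightarrow> bool" where
  "ereal_convex g \<longleftrightarrow>
     (\<forall>x y t. 0 < t \<and> t < 1 \<longrightarrow>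
        g ((1 - t) *\<^sub>R x + t *\<^sub>R y) \<le> ereal (1 - t) * g x + ereal t * g y)"

definition semiconvex :: "real \<Rightarrow> ('a::real_inner \<Rightarrow> ereal) \<Rightarrow> bool" where
  "semiconvex \<alpha> f \<longleftrightarrow> proper_fun f \<and> lsc_fun f \<and>
     ereal_convex (\<lambda>x. f x + ereal (\<alpha> / 2 * (norm x)\<^sup>2))"

definition prox :: "('a::real_inner \<Rightarrow> ereal) \<Rightarrow> real \<Rightarrow> 'a \<Rightarrow> 'a" where
  "prox f lam x = (THE y. \<forall>z. f y + ereal ((norm (y - x))\<^sup>2 / (2 * lam))
                              \<le> f z + ereal ((norm (z - x))\<^sup>2 / (2 * lam)))"

definition frechet_subdiff :: "('a::real_inner \<Rightarrow> ereal) \<Rightarrow> 'a \<Rightarrow> 'a set" where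
  "frechet_subdiff f x =
     (if \<bar>f x\<bar> = \<infinity> then {}
      else {p. Liminf (at x)
                 (\<lambda>y. (f y - f x - ereal (inner p (y - x))) / ereal (norm (y - x))) \<ge> 0})"

text \<open>\<parallel>C\<parallel>_- = inf of norms, +\<infinity> for the empty set.\<close>
definition minnorm :: "'a::real_normed_vector set \<Rightarrow> ereal" where
  "minnorm C = Inf ((\<lambda>p. ereal (norm p)) ` C)"

definition class_K :: "real \<Rightarrow> (real \<Rightarrow> real) \<Rightarrow> bool" where
  "class_K r0 \<phi> \<longleftrightarrow> continuous_on {0..<r0} \<phi> \<and> \<phi> 0 = 0 \<and>
     (\<forall>t\<in>{0<..<r0}. \<phi> differentiable (at t)) \<and>
     continuous_on {0<..<r0} (deriv \<phi>) \<and>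
     (\<forall>t\<in>{0<..<r0}. deriv \<phi> t > 0)"

text \<open>The composition \<phi> \<circ> f as an extended-valued function: \<phi> is only defined
  on [0,r0), so the composition is set to +\<infinity> where f leaves [0,r0).\<close>
definition comp_K :: "real \<Rightarrow> (real \<Rightarrow> real) \<Rightarrow> ('a \<Rightarrow> ereal) \<Rightarrow> 'a \<Rightarrow> ereal" where
  "comp_K r0 \<phi> f y = (if 0 \<le> f y \<and> f y < ereal r0 then ereal (\<phi> (real_of_ereal (f y))) else \<infinity>)"

end

theory Submission
  imports Defs
begin

text \<open>Write \<open>x\<^sub>\<mu> = prox\<^sub>\<mu> x\<close> for \<open>0 < \<mu> \<le> \<lambda>\<close>. Comparing the prox minimality at two
  parameters \<open>\<mu> < \<nu>\<close> shows that \<open>\<parallel>x\<^sub>\<mu> - x\<parallel>\<close> increases and \<open>f x\<^sub>\<mu>\<close> decreases in \<open>\<mu>\<close>, both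
  Lipschitz away from \<open>0\<close>. Semiconvexity makes \<open>(x - x\<^sub>\<nu>) / \<nu>\<close> a subgradient of \<open>f\<close> at \<open>x\<^sub>\<nu>\<close>
  up to a quadratic error, so \<open>\<phi>'(f x\<^sub>\<nu>) (x - x\<^sub>\<nu>) / \<nu>\<close> is a Frechet subgradient of
  \<open>\<phi> \<circ> f\<close> and the KL hypothesis yields \<open>\<phi>'(f x\<^sub>\<nu>) \<parallel>x\<^sub>\<nu> - x\<parallel> / \<nu> \<ge> 1\<close>. A discrete chain
  rule then shows that \<open>\<mu> \<mapsto> \<phi>(f x\<^sub>\<mu>) + \<parallel>x\<^sub>\<mu> - x\<parallel>\<close> is nonincreasing, and letting
  \<open>\<mu> \<rightarrow> 0\<close>, where \<open>\<parallel>x\<^sub>\<mu> - x\<parallel>\<^sup>2 \<le> 2 \<mu> f x\<close>, gives the bound.\<close>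

lemma ereal_convexD_real:
  assumes "ereal_convex G" "0 < t" "t < 1" "G x = ereal a" "G y = ereal b"
  shows "G ((1 - t) *\<^sub>R x + t *\<^sub>R y) \<le> ereal ((1 - t) * a + t * b)"
proof -
  have "G ((1 - t) *\<^sub>R x + t *\<^sub>R y) \<le> ereal (1 - t) * G x + ereal t * G y"
    using assms(1-3) unfolding ereal_convex_def by blast
  then show ?thesis using assms(4,5) by simp
qed

lemma power2_norm_convex_comb:
  fixes p z :: "'a::real_inner"
  shows "(norm ((1 - t) *\<^sub>R p + t *\<^sub>R z))\<^sup>2
           = (1 - t) * (norm p)\<^sup>2 + t * (norm z)\<^sup>2 - t * (1 - t) * (norm (z - p))\<^sup>2"
  unfolding power2_norm_eq_inner
  by (simp add: inner_add_left inner_add_right inner_diff_left inner_diff_right inner_commute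
      algebra_simps power2_eq_square)

lemma power2_norm_convex_comb_diff:
  fixes p z x :: "'a::real_inner"
  shows "(norm ((1 - t) *\<^sub>R p + t *\<^sub>R z - x))\<^sup>2
           = (norm (p - x))\<^sup>2 + 2 * t * inner (p - x) (z - p) + t\<^sup>2 * (norm (z - p))\<^sup>2"
  unfolding power2_norm_eq_inner
  by (simp add: inner_add_left inner_add_right inner_diff_left inner_diff_right inner_commute
      algebra_simps power2_eq_square)

lemma le_of_le_add_small_multiple:
  fixes a b C :: real
  assumes "\<And>t. 0 < t \<Longrightarrow> t < 1 \<Longrightarrow> a \<le> b + t * C"
  shows "a \<le> b"
proof (rule field_le_epsilon)
  fix e :: real assume "0 < e"
  define t where "t = min (1/2) (e / (\<bar>C\<bar> + 1))"
  have t: "0 < t" "t < 1" using \<open>0 < e\<close> unfolding t_def by auto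
  have "t * C \<le> t * (\<bar>C\<bar> + 1)" using t by (intro mult_left_mono) auto
  also have "\<dots> \<le> e / (\<bar>C\<bar> + 1) * (\<bar>C\<bar> + 1)"
    unfolding t_def by (intro mult_right_mono) auto
  finally have "t * C \<le> e" by simp
  then show "a \<le> b + e" using assms[OF t] by simp
qed

lemma quadratic_lower_bound:
  fixes c2 c1 c0 r :: real
  assumes "c2 > 0"
  shows "c0 - c1\<^sup>2 / (4 * c2) \<le> c2 * r\<^sup>2 + c1 * r + c0"
proof -
  have "0 \<le> (2 * c2 * r + c1)\<^sup>2" by simp
  then have "0 \<le> 4 * c2 * (c2 * r\<^sup>2 + c1 * r) + c1\<^sup>2" by (simp add: power2_eq_square algebra_simps)
  then show ?thesis using assms by (simp add: field_simps)
qed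

lemma lsc_fun_eventually_gt:
  assumes "lsc_fun f" "ereal c < f p"
  shows "\<forall>\<^sub>F y in nhds p. ereal c < f y"
proof -
  have "f p \<le> Liminf (at p) f" using assms(1) unfolding lsc_fun_def by blast
  then have "\<forall>\<^sub>F y in at p. ereal c < f y" using assms(2) unfolding le_Liminf_iff by blast
  then show ?thesis using assms(2) by (simp add: eventually_nhds_conv_at)
qed

lemma lsc_fun_tendsto_le:
  assumes lsc: "lsc_fun f" and Y: "Y \<longlonglongrightarrow> p" and a: "\<And>n. f (Y n) = ereal (a n)" "a \<longlonglongrightarrow> l"
  shows "f p \<le> ereal l"
proof (rule ccontr)
  assume "\<not> f p \<le> ereal l"
  then have "ereal l < f p" by simp
  then obtain c where c: "ereal l < ereal c" "ereal c < f p" using ereal_dense2 by blast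
  have "\<forall>\<^sub>F n in sequentially. ereal c < f (Y n)"
    by (rule eventually_compose_filterlim[OF lsc_fun_eventually_gt[OF lsc c(2)] Y])
  then have "\<forall>\<^sub>F n in sequentially. c \<le> a n" by eventually_elim (simp add: a(1))
  then have "c \<le> l" by (intro tendsto_lowerbound[OF a(2)]) simp_all
  then show False using c(1) by simp
qed

locale semiconvex_fun =
  fixes \<alpha> :: real and f :: "'a::real_inner \<Rightarrow> ereal"
  assumes alpha_nonneg: "0 \<le> \<alpha>" and semiconvex: "semiconvex \<alpha> f"
begin

lemma not_MInfty: "f y \<noteq> -\<infinity>"
  using semiconvex unfolding semiconvex_def proper_fun_def by blast

lemma finite_point: obtains x0 c0 where "f x0 = ereal c0"
  using semiconvex not_MInfty unfolding semiconvex_def proper_fun_def by (metis ereal_cases)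

lemma lsc: "lsc_fun f"
  using semiconvex unfolding semiconvex_def by blast

lemma semiconvex_ineq:
  assumes "0 < t" "t < 1" "f p = ereal a" "f z = ereal c"
  shows "f ((1 - t) *\<^sub>R p + t *\<^sub>R z)
           \<le> ereal ((1 - t) * a + t * c + \<alpha> / 2 * (t * (1 - t) * (norm (z - p))\<^sup>2))"
proof -
  define w where "w = (1 - t) *\<^sub>R p + t *\<^sub>R z"
  define R where "R = (1 - t) * (a + \<alpha> / 2 * (norm p)\<^sup>2) + t * (c + \<alpha> / 2 * (norm z)\<^sup>2)"
  have le: "f w + ereal (\<alpha> / 2 * (norm w)\<^sup>2) \<le> ereal R"
    unfolding w_def R_def
    by (rule ereal_convexD_real[of "\<lambda>x. f x + ereal (\<alpha> / 2 * (norm x)\<^sup>2)"])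
      (use semiconvex assms in \<open>auto simp: semiconvex_def\<close>)
  then obtain e where e: "f w = ereal e" "e + \<alpha> / 2 * (norm w)\<^sup>2 \<le> R"
    using not_MInfty[of w] by (cases "f w") auto
  have "R - \<alpha> / 2 * (norm w)\<^sup>2
          = (1 - t) * a + t * c + \<alpha> / 2 * ((1 - t) * (norm p)\<^sup>2 + t * (norm z)\<^sup>2 - (norm w)\<^sup>2)"
    unfolding R_def by (simp add: field_simps)
  also have "(1 - t) * (norm p)\<^sup>2 + t * (norm z)\<^sup>2 - (norm w)\<^sup>2 = t * (1 - t) * (norm (z - p))\<^sup>2"
    unfolding w_def power2_norm_convex_comb by simp
  finally show ?thesis using e unfolding w_def by simp
qed

lemma quadratic_minorant:
  assumes x0: "f x0 = ereal c0"
  shows "\<exists>A B. \<forall>y. ereal (A - B * norm (y - x0) - \<alpha> / 2 * (norm (y - x0))\<^sup>2) \<le> f y"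
proof -
  obtain \<delta> where \<delta>: "\<delta> > 0" "\<And>y. dist y x0 < \<delta> \<Longrightarrow> ereal (c0 - 1) < f y"
    using lsc_fun_eventually_gt[OF lsc, of "c0 - 1" x0] x0 unfolding eventually_nhds_metric by auto
  have "ereal (c0 - 1 - 2 / \<delta> * r - \<alpha> / 2 * r\<^sup>2) \<le> f y" if r: "r = norm (y - x0)" for y r
  proof (cases "r < \<delta>")
    case True
    have "0 \<le> 2 / \<delta> * r" "0 \<le> \<alpha> / 2 * r\<^sup>2" using \<delta>(1) alpha_nonneg r by simp_all
    then have "ereal (c0 - 1 - 2 / \<delta> * r - \<alpha> / 2 * r\<^sup>2) \<le> ereal (c0 - 1)" by simp
    also have "\<dots> \<le> f y" using \<delta>(2)[of y] True r by (simp add: dist_norm)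
    finally show ?thesis .
  next
    case False
    show ?thesis
    proof (cases "f y")
      case (real c)
      define t where "t = \<delta> / (2 * r)"
      have t: "0 < t" "t < 1" "1 / t = 2 / \<delta> * r" using False \<delta>(1) unfolding t_def by auto
      define z where "z = (1 - t) *\<^sub>R x0 + t *\<^sub>R y"
      have "dist z x0 = t * r" unfolding z_def r dist_norm using t
        by (simp add: algebra_simps flip: scaleR_diff_right)
      also have "\<dots> < \<delta>" using False \<delta>(1) unfolding t_def by (auto simp: field_simps)
      finally have "ereal (c0 - 1) < f z" by (rule \<delta>(2))
      also have "f z \<le> ereal ((1 - t) * c0 + t * c + \<alpha> / 2 * (t * (1 - t) * r\<^sup>2))"
        unfolding z_def r using semiconvex_ineq[OF t(1,2) x0 real] .
      finally have "c0 - 1 < (1 - t) * c0 + t * c + \<alpha> / 2 * (t * (1 - t) * r\<^sup>2)" by simp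
      moreover have "t * (c0 - 1 / t - \<alpha> / 2 * ((1 - t) * r\<^sup>2))
                       = t * c0 - 1 - \<alpha> / 2 * (t * (1 - t) * r\<^sup>2)"
        using t(1) by (simp add: algebra_simps)
      ultimately have "t * (c0 - 1 / t - \<alpha> / 2 * ((1 - t) * r\<^sup>2)) < t * c"
        by (simp add: algebra_simps)
      then have "c0 - 1 / t - \<alpha> / 2 * ((1 - t) * r\<^sup>2) < c" using t by simp
      moreover have "(1 - t) * r\<^sup>2 \<le> 1 * r\<^sup>2" by (rule mult_right_mono) (use t in auto)
      then have "\<alpha> / 2 * ((1 - t) * r\<^sup>2) \<le> \<alpha> / 2 * r\<^sup>2"
        using alpha_nonneg by (intro mult_left_mono) auto
      ultimately show ?thesis using real t(3) by simp
    qed (use not_MInfty in auto)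
  qed
  then show ?thesis by blast
qed

lemma minimizer_subgradient_ineq:
  assumes \<mu>: "0 < \<mu>"
    and min: "\<And>z. f p + ereal ((norm (p - x))\<^sup>2 / (2 * \<mu>)) \<le> f z + ereal ((norm (z - x))\<^sup>2 / (2 * \<mu>))"
    and p: "f p = ereal c"
  shows "ereal (c + inner ((1 / \<mu>) *\<^sub>R (x - p)) (z - p) - \<alpha> / 2 * (norm (z - p))\<^sup>2) \<le> f z"
proof (cases "f z")
  case (real a)
  define D where "D = (norm (z - p))\<^sup>2"
  define I where "I = inner (p - x) (z - p)"
  have "c \<le> a + I / \<mu> + \<alpha> / 2 * D + t * (D / (2 * \<mu>) - \<alpha> / 2 * D)" if t: "0 < t" "t < 1" for t
  proof -
    define w where "w = (1 - t) *\<^sub>R p + t *\<^sub>R z"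
    obtain e where e: "f w = ereal e" "e \<le> (1 - t) * c + t * a + \<alpha> / 2 * (t * (1 - t) * D)"
      using semiconvex_ineq[OF t p real] not_MInfty[of w] unfolding w_def[symmetric] D_def
      by (cases "f w") auto
    have "c + (norm (p - x))\<^sup>2 / (2 * \<mu>) \<le> e + ((norm (p - x))\<^sup>2 + 2 * t * I + t\<^sup>2 * D) / (2 * \<mu>)"
      using min[of w] p e(1) unfolding w_def power2_norm_convex_comb_diff I_def D_def by simp
    then have "c \<le> (1 - t) * c + t * a + \<alpha> / 2 * (t * (1 - t) * D) + (2 * t * I + t\<^sup>2 * D) / (2 * \<mu>)"
      using e(2) by (simp add: add_divide_distrib)
    then have "t * c \<le> t * (a + I / \<mu> + \<alpha> / 2 * D + t * (D / (2 * \<mu>) - \<alpha> / 2 * D))"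
      using \<mu> by (simp add: algebra_simps add_divide_distrib power2_eq_square)
    then show ?thesis using t by simp
  qed
  then have "c \<le> a + I / \<mu> + \<alpha> / 2 * D" by (rule le_of_le_add_small_multiple)
  moreover have "inner ((1 / \<mu>) *\<^sub>R (x - p)) (z - p) = - I / \<mu>"
    unfolding I_def by (simp add: inner_diff_left)
  ultimately show ?thesis using real unfolding D_def by simp
qed (use not_MInfty in auto)

lemma prox_objective_bounded_below:
  assumes \<mu>: "0 < \<mu>" "\<mu> * \<alpha> < 1"
  shows "\<exists>L. \<forall>z. ereal L \<le> f z + ereal ((norm (z - x))\<^sup>2 / (2 * \<mu>))"
proof -
  obtain x0 c0 where x0: "f x0 = ereal c0" using finite_point .
  obtain A B where AB: "\<And>y. ereal (A - B * norm (y - x0) - \<alpha> / 2 * (norm (y - x0))\<^sup>2) \<le> f y"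
    using quadratic_minorant[OF x0] by blast
  define a where "a = norm (x - x0)"
  define c2 where "c2 = 1 / (2 * \<mu>) - \<alpha> / 2"
  define c1 where "c1 = - \<bar>B\<bar> - \<alpha> * a"
  define c0' where "c0' = A - \<bar>B\<bar> * a - \<alpha> / 2 * a\<^sup>2"
  have c2: "c2 > 0" unfolding c2_def using \<mu> by (simp add: field_simps)
  have "ereal (c0' - c1\<^sup>2 / (4 * c2)) \<le> f z + ereal ((norm (z - x))\<^sup>2 / (2 * \<mu>))" for z
  proof -
    define r where "r = norm (z - x)"
    define n where "n = norm (z - x0)"
    have nr: "n \<le> a + r" "0 \<le> n" "0 \<le> r" unfolding n_def a_def r_def
      using norm_triangle_ineq[of "z - x" "x - x0"] by auto
    have "B * n \<le> \<bar>B\<bar> * (a + r)" using nr by (meson abs_ge_self abs_ge_zero order_trans mult_mono)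
    moreover have "\<alpha> / 2 * n\<^sup>2 \<le> \<alpha> / 2 * (a + r)\<^sup>2"
      using nr alpha_nonneg by (intro mult_left_mono power_mono) auto
    moreover have "A - \<bar>B\<bar> * (a + r) - \<alpha> / 2 * (a + r)\<^sup>2 + r\<^sup>2 / (2 * \<mu>) = c2 * r\<^sup>2 + c1 * r + c0'"
      unfolding c2_def c1_def c0'_def by (simp add: power2_eq_square field_simps)
    moreover have "c0' - c1\<^sup>2 / (4 * c2) \<le> c2 * r\<^sup>2 + c1 * r + c0'" by (rule quadratic_lower_bound[OF c2])
    ultimately have "ereal (c0' - c1\<^sup>2 / (4 * c2)) \<le> ereal (A - B * n - \<alpha> / 2 * n\<^sup>2) + ereal (r\<^sup>2 / (2 * \<mu>))"
      by simp
    also have "\<dots> \<le> f z + ereal (r\<^sup>2 / (2 * \<mu>))" unfolding n_def by (intro add_right_mono AB)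
    finally show ?thesis unfolding r_def .
  qed
  then show ?thesis by blast
qed

lemma prox_objective_midpoint:
  assumes "0 < \<mu>" "f y1 = ereal a1" "f y2 = ereal a2"
  shows "f (midpoint y1 y2) + ereal ((norm (midpoint y1 y2 - x))\<^sup>2 / (2 * \<mu>))
           \<le> ereal ((a1 + (norm (y1 - x))\<^sup>2 / (2 * \<mu>) + a2 + (norm (y2 - x))\<^sup>2 / (2 * \<mu>)) / 2
                    - (1 / \<mu> - \<alpha>) / 8 * (norm (y1 - y2))\<^sup>2)"
proof -
  have w: "midpoint y1 y2 = (1 - 1/2) *\<^sub>R y1 + (1/2::real) *\<^sub>R y2"
    by (simp add: midpoint_def scaleR_add_right)
  have "midpoint y1 y2 - x = (1 - 1/2) *\<^sub>R (y1 - x) + (1/2::real) *\<^sub>R (y2 - x)"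
    by (simp add: midpoint_def algebra_simps) (metis scaleR_add_left field_sum_of_halves scaleR_one)
  then have Nw: "(norm (midpoint y1 y2 - x))\<^sup>2
               = ((norm (y1 - x))\<^sup>2 + (norm (y2 - x))\<^sup>2) / 2 - (norm (y1 - y2))\<^sup>2 / 4"
    using power2_norm_convex_comb[of "1/2" "y1 - x" "y2 - x"] by (simp add: norm_minus_commute)
  obtain r where r: "f (midpoint y1 y2) = ereal r" "r \<le> (a1 + a2) / 2 + \<alpha> / 8 * (norm (y1 - y2))\<^sup>2"
    using semiconvex_ineq[of "1/2", OF _ _ assms(2,3)] not_MInfty[of "midpoint y1 y2"] unfolding w[symmetric]
    by (cases "f (midpoint y1 y2)") (auto simp: norm_minus_commute add_divide_distrib)
  have "(a1 + (norm (y1 - x))\<^sup>2 / (2 * \<mu>) + a2 + (norm (y2 - x))\<^sup>2 / (2 * \<mu>)) / 2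
          - (1 / \<mu> - \<alpha>) / 8 * (norm (y1 - y2))\<^sup>2
        = (a1 + a2) / 2 + \<alpha> / 8 * (norm (y1 - y2))\<^sup>2
          + (((norm (y1 - x))\<^sup>2 + (norm (y2 - x))\<^sup>2) / 2 - (norm (y1 - y2))\<^sup>2 / 4) / (2 * \<mu>)"
    using assms(1) by (simp add: field_simps)
  then show ?thesis using r unfolding Nw by simp
qed

lemma minimizer_unique:
  assumes \<mu>: "0 < \<mu>" "\<mu> * \<alpha> < 1"
    and p: "\<And>z. f p + ereal ((norm (p - x))\<^sup>2 / (2 * \<mu>)) \<le> f z + ereal ((norm (z - x))\<^sup>2 / (2 * \<mu>))"
    and q: "\<And>z. f q + ereal ((norm (q - x))\<^sup>2 / (2 * \<mu>)) \<le> f z + ereal ((norm (z - x))\<^sup>2 / (2 * \<mu>))"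
  shows "q = p"
proof -
  obtain x0 c0 where x0: "f x0 = ereal c0" using finite_point .
  obtain c where c: "f p = ereal c"
    using p[of x0] x0 not_MInfty[of p] by (cases "f p") auto
  define D where "D = (norm (q - p))\<^sup>2"
  define J where "J = inner ((1 / \<mu>) *\<^sub>R (x - p)) (q - p)"
  have "ereal (c + J - \<alpha> / 2 * D) + ereal ((norm (q - x))\<^sup>2 / (2 * \<mu>))
          \<le> f q + ereal ((norm (q - x))\<^sup>2 / (2 * \<mu>))"
    unfolding D_def J_def by (intro add_right_mono minimizer_subgradient_ineq[OF \<mu>(1) p c])
  also have "\<dots> \<le> ereal (c + (norm (p - x))\<^sup>2 / (2 * \<mu>))" using q[of p] c by simp
  finally have "J - \<alpha> / 2 * D + (norm (q - x))\<^sup>2 / (2 * \<mu>) \<le> (norm (p - x))\<^sup>2 / (2 * \<mu>)" by simp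
  moreover have "J + (norm (q - x))\<^sup>2 / (2 * \<mu>) = (norm (p - x))\<^sup>2 / (2 * \<mu>) + D / (2 * \<mu>)"
  proof -
    have "(norm (q - x))\<^sup>2 = (norm (p - x))\<^sup>2 + 2 * inner (p - x) (q - p) + D"
      using power2_norm_convex_comb_diff[of 1 p q x] unfolding D_def by simp
    moreover have "J = - inner (p - x) (q - p) / \<mu>"
      unfolding J_def by (simp add: inner_diff_left)
    ultimately show ?thesis using \<mu>(1) by (simp add: field_simps)
  qed
  ultimately have "D / (2 * \<mu>) - \<alpha> / 2 * D \<le> 0" by linarith
  then have "D * (1 - \<mu> * \<alpha>) \<le> 0" using \<mu>(1) by (simp add: field_simps)
  then have "D = 0" using \<mu>(2) unfolding D_def by (simp add: mult_le_0_iff)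
  then show ?thesis unfolding D_def by simp
qed

text \<open>The prox objective is strongly convex with modulus \<open>1/\<mu> - \<alpha>\<close>, measured at midpoints.\<close>

lemma prox_minimizing_seq_Cauchy:
  assumes \<mu>: "0 < \<mu>" "\<mu> * \<alpha> < 1"
    and lower: "\<And>z. ereal i \<le> f z + ereal ((norm (z - x))\<^sup>2 / (2 * \<mu>))"
    and Y: "\<And>n. f (Y n) = ereal (a n)" "\<And>n. a n + (norm (Y n - x))\<^sup>2 / (2 * \<mu>) < i + 1 / Suc n"
  shows "Cauchy Y"
proof (rule CauchyI)
  define \<kappa> where "\<kappa> = (1 / \<mu> - \<alpha>) / 8"
  have \<kappa>: "\<kappa> > 0" unfolding \<kappa>_def using \<mu> by (simp add: field_simps)
  fix e :: real assume e: "0 < e"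
  obtain N where N: "1 / Suc N < \<kappa> * e\<^sup>2" using \<kappa> e by (metis mult_pos_pos nat_approx_posE zero_less_power)
  have "norm (Y m - Y n) < e" if "N \<le> m" "N \<le> n" for m n
  proof -
    define \<Phi> where "\<Phi> k = a k + (norm (Y k - x))\<^sup>2 / (2 * \<mu>)" for k
    have "ereal i \<le> ereal ((a m + (norm (Y m - x))\<^sup>2 / (2 * \<mu>) + a n + (norm (Y n - x))\<^sup>2 / (2 * \<mu>)) / 2
                              - (1 / \<mu> - \<alpha>) / 8 * (norm (Y m - Y n))\<^sup>2)"
      using order_trans[OF lower prox_objective_midpoint[OF \<mu>(1) Y(1)[of m] Y(1)[of n]]] .
    then have "\<kappa> * (norm (Y m - Y n))\<^sup>2 \<le> ((\<Phi> m - i) + (\<Phi> n - i)) / 2"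
      unfolding \<Phi>_def \<kappa>_def by (simp add: field_simps)
    also have "\<dots> < 1 / Suc N"
    proof -
      have "1 / Suc m \<le> 1 / Suc N" "1 / Suc n \<le> 1 / Suc N" using that by (auto simp: frac_le)
      then have "(\<Phi> m - i) + (\<Phi> n - i) < 2 * (1 / Suc N)" using Y(2)[of m] Y(2)[of n] unfolding \<Phi>_def by linarith
      then show ?thesis by simp
    qed
    finally have "\<kappa> * (norm (Y m - Y n))\<^sup>2 < \<kappa> * e\<^sup>2" using N by linarith
    then have "(norm (Y m - Y n))\<^sup>2 < e\<^sup>2" using \<kappa> by simp
    then show ?thesis using e by (simp add: power_less_imp_less_base)
  qed
  then show "\<exists>M. \<forall>m\<ge>M. \<forall>n\<ge>M. norm (Y m - Y n) < e" by blast
qed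

end

locale semiconvex_hilbert = semiconvex_fun \<alpha> f
  for \<alpha> and f :: "'a::{real_inner, complete_space} \<Rightarrow> ereal"
begin

lemma prox_minimizer_exists:
  assumes \<mu>: "0 < \<mu>" "\<mu> * \<alpha> < 1"
  shows "\<exists>p. \<forall>z. f p + ereal ((norm (p - x))\<^sup>2 / (2 * \<mu>)) \<le> f z + ereal ((norm (z - x))\<^sup>2 / (2 * \<mu>))"
proof -
  define g where "g z = (norm (z - x))\<^sup>2 / (2 * \<mu>)" for z
  define I where "I = (INF z. f z + ereal (g z))"
  have I_le: "I \<le> f z + ereal (g z)" for z unfolding I_def by (rule INF_lower) simp
  obtain L where "\<And>z. ereal L \<le> f z + ereal (g z)"
    using prox_objective_bounded_below[OF \<mu>] unfolding g_def by blast
  then have "ereal L \<le> I" unfolding I_def by (rule INF_greatest)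
  moreover obtain x0 c0 where "f x0 = ereal c0" using finite_point .
  ultimately obtain i where i: "I = ereal i" using I_le[of x0] by (cases I) auto
  have "\<exists>y a. f y = ereal a \<and> a + g y < i + 1 / Suc n" for n
  proof -
    have "I < ereal (i + 1 / Suc n)" using i by simp
    then obtain y where "f y + ereal (g y) < ereal (i + 1 / Suc n)" unfolding I_def by (auto simp: INF_less_iff)
    then show ?thesis using not_MInfty[of y] by (cases "f y") auto
  qed
  then obtain Y a where Ya: "\<And>n. f (Y n) = ereal (a n)" "\<And>n. a n + g (Y n) < i + 1 / Suc n"
    by metis
  have i_le: "i \<le> a n + g (Y n)" for n using I_le[of "Y n"] Ya(1) i by simp
  have "Cauchy Y"
    by (rule prox_minimizing_seq_Cauchy[OF \<mu> _ Ya[unfolded g_def]]) (use I_le i in \<open>simp add: g_def\<close>)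
  then obtain p where Yp: "Y \<longlonglongrightarrow> p" using Cauchy_convergent_iff convergent_def by blast
  have "(\<lambda>n. a n + g (Y n)) \<longlonglongrightarrow> i"
  proof (rule tendsto_sandwich[of "\<lambda>n. i" _ _ "\<lambda>n. i + 1 / Suc n"])
    show "(\<lambda>n. i + 1 / Suc n) \<longlonglongrightarrow> i"
      using tendsto_add[OF tendsto_const LIMSEQ_inverse_real_of_nat] by (simp add: inverse_eq_divide)
  qed (use i_le Ya(2) in \<open>auto intro: always_eventually less_imp_le\<close>)
  moreover have "(\<lambda>n. g (Y n)) \<longlonglongrightarrow> g p" unfolding g_def using \<mu>(1) by (intro tendsto_intros Yp) auto
  ultimately have "(\<lambda>n. (a n + g (Y n)) - g (Y n)) \<longlonglongrightarrow> i - g p" by (rule tendsto_diff)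
  then have "f p \<le> ereal (i - g p)" using lsc_fun_tendsto_le[OF lsc Yp Ya(1)] by simp
  then have "f p + ereal (g p) \<le> I" using i by (cases "f p") auto
  then show ?thesis using I_le unfolding g_def by (meson order_trans)
qed

lemma prox_minimizes:
  assumes "0 < \<mu>" "\<mu> * \<alpha> < 1"
  shows "f (prox f \<mu> x) + ereal ((norm (prox f \<mu> x - x))\<^sup>2 / (2 * \<mu>))
           \<le> f z + ereal ((norm (z - x))\<^sup>2 / (2 * \<mu>))"
proof -
  obtain p where p: "\<forall>z. f p + ereal ((norm (p - x))\<^sup>2 / (2 * \<mu>)) \<le> f z + ereal ((norm (z - x))\<^sup>2 / (2 * \<mu>))"
    using prox_minimizer_exists[OF assms] by blast
  have "prox f \<mu> x = p" unfolding prox_def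
    by (rule the_equality) (use p minimizer_unique[OF assms] in blast)+
  then show ?thesis using p by simp
qed

lemma prox_finite:
  assumes "0 < \<mu>" "\<mu> * \<alpha> < 1"
  shows "f (prox f \<mu> x) = ereal (real_of_ereal (f (prox f \<mu> x)))"
proof -
  obtain x0 c0 where "f x0 = ereal c0" using finite_point .
  then show ?thesis
    using prox_minimizes[OF assms, where z = x0 and x = x] not_MInfty[of "prox f \<mu> x"]
    by (cases "f (prox f \<mu> x)") auto
qed

lemma prox_subgradient_ineq:
  assumes "0 < \<mu>" "\<mu> * \<alpha> < 1"
  shows "ereal (real_of_ereal (f (prox f \<mu> x)) + inner ((1 / \<mu>) *\<^sub>R (x - prox f \<mu> x)) (z - prox f \<mu> x)
                 - \<alpha> / 2 * (norm (z - prox f \<mu> x))\<^sup>2) \<le> f z"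
  by (rule minimizer_subgradient_ineq[OF assms(1) prox_minimizes[OF assms] prox_finite[OF assms]])

end

text \<open>Here \<open>w = x - x\<^sub>\<mu>\<close> and \<open>w' = x - x\<^sub>\<nu>\<close>: the hypotheses are the subgradient inequalities
  at \<open>x\<^sub>\<nu>\<close> and \<open>x\<^sub>\<mu>\<close>, each evaluated at the other point.\<close>

lemma subgradient_pair_bounds:
  fixes w w' :: "'a::real_inner"
  assumes h1: "F\<nu> + inner ((1 / \<nu>) *\<^sub>R w') (w' - w) - \<alpha> / 2 * (norm (w' - w))\<^sup>2 \<le> F\<mu>"
    and h2: "F\<mu> + inner ((1 / \<mu>) *\<^sub>R w) (w - w') - \<alpha> / 2 * (norm (w - w'))\<^sup>2 \<le> F\<nu>"
    and \<mu>\<nu>: "0 < \<mu>" "\<mu> < \<nu>" "\<alpha> * \<nu> < 1"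
  shows "norm (w' - w) \<le> (\<nu> - \<mu>) * norm w / (\<mu> * (1 - \<alpha> * \<nu>))"
    and "norm w' / \<nu> * (norm w' - norm w) - \<alpha> / 2 * (norm (w' - w))\<^sup>2 \<le> F\<mu> - F\<nu>"
proof -
  define D where "D = w' - w"
  define n where "n = norm D"
  have "w' = w + D" unfolding D_def by simp
  then have i1: "inner ((1 / \<nu>) *\<^sub>R w') (w' - w) = (inner w D + n\<^sup>2) / \<nu>"
    unfolding D_def[symmetric] n_def by (simp add: inner_add_left power2_norm_eq_inner)
  have i2: "inner ((1 / \<mu>) *\<^sub>R w) (w - w') = - inner w D / \<mu>"
    unfolding D_def by (simp add: inner_diff_right diff_divide_distrib)
  have n: "norm (w - w') = n" "norm (w' - w) = n" unfolding n_def D_def by (simp_all add: norm_minus_commute)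
  have "F\<nu> + (inner w D + n\<^sup>2) / \<nu> - \<alpha> / 2 * n\<^sup>2 \<le> F\<mu>" "F\<mu> + - inner w D / \<mu> - \<alpha> / 2 * n\<^sup>2 \<le> F\<nu>"
    using h1 h2 unfolding i1 i2 n by auto
  then have "(inner w D + n\<^sup>2) / \<nu> - inner w D / \<mu> - \<alpha> * n\<^sup>2 \<le> 0" by simp
  then have "n\<^sup>2 * (1 / \<nu> - \<alpha>) \<le> inner w D * (1 / \<mu> - 1 / \<nu>)" by (simp add: add_divide_distrib algebra_simps)
  also have "\<dots> \<le> (norm w * n) * (1 / \<mu> - 1 / \<nu>)"
    using norm_cauchy_schwarz[of w D] \<mu>\<nu> unfolding n_def by (intro mult_right_mono) (auto simp: frac_le)
  finally have ineq: "n * (n * (1 / \<nu> - \<alpha>)) \<le> n * (norm w * (1 / \<mu> - 1 / \<nu>))"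
    by (simp add: power2_eq_square algebra_simps)
  have k: "0 < 1 / \<nu> - \<alpha>" using \<mu>\<nu> by (simp add: field_simps)
  have "n * (1 / \<nu> - \<alpha>) \<le> norm w * (1 / \<mu> - 1 / \<nu>)"
  proof (cases "n = 0")
    case True
    then show ?thesis using \<mu>\<nu> by (simp add: frac_le)
  next
    case False
    then show ?thesis using ineq unfolding n_def by simp
  qed
  then have "n \<le> norm w * (1 / \<mu> - 1 / \<nu>) / (1 / \<nu> - \<alpha>)" using k by (simp add: field_simps)
  also have "\<dots> = (\<nu> - \<mu>) * norm w / (\<mu> * (1 - \<alpha> * \<nu>))" using \<mu>\<nu> by (simp add: field_simps)
  finally show "norm (w' - w) \<le> (\<nu> - \<mu>) * norm w / (\<mu> * (1 - \<alpha> * \<nu>))" unfolding n_def D_def .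
  have "norm w' / \<nu> * (norm w' - norm w) \<le> ((norm w')\<^sup>2 - inner w' w) / \<nu>"
    using norm_cauchy_schwarz[of w' w] \<mu>\<nu>
    by (simp add: power2_eq_square algebra_simps diff_divide_distrib divide_right_mono)
  also have "\<dots> = inner ((1 / \<nu>) *\<^sub>R w') (w' - w)"
    by (simp add: inner_diff_right power2_norm_eq_inner diff_divide_distrib)
  finally show "norm w' / \<nu> * (norm w' - norm w) - \<alpha> / 2 * (norm (w' - w))\<^sup>2 \<le> F\<mu> - F\<nu>"
    using h1 by simp
qed

locale prox_path = semiconvex_hilbert \<alpha> f
  for \<alpha> and f :: "'a::{real_inner, complete_space} \<Rightarrow> ereal" +
  fixes x :: 'a and lam :: real
  assumes lam_pos: "0 < lam" and lam_alpha: "lam * \<alpha> < 1" and start_finite: "f x \<noteq> \<infinity>"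
begin

definition prox_pt :: "real \<Rightarrow> 'a" where "prox_pt \<mu> = prox f \<mu> x"
definition prox_val :: "real \<Rightarrow> real" where "prox_val \<mu> = real_of_ereal (f (prox_pt \<mu>))"
definition prox_dist :: "real \<Rightarrow> real" where "prox_dist \<mu> = norm (prox_pt \<mu> - x)"

lemma mult_alpha_lt_one:
  assumes "0 < \<mu>" "\<mu> \<le> lam"
  shows "\<mu> * \<alpha> < 1"
  using mult_right_mono[OF assms(2) alpha_nonneg] lam_alpha by simp

lemma f_prox_pt: "0 < \<mu> \<Longrightarrow> \<mu> \<le> lam \<Longrightarrow> f (prox_pt \<mu>) = ereal (prox_val \<mu>)"
  unfolding prox_val_def prox_pt_def using prox_finite mult_alpha_lt_one by blast

lemma f_start: "f x = ereal (real_of_ereal (f x))"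
  using start_finite not_MInfty[of x] by (cases "f x") auto

lemma prox_val_dist_le:
  assumes "0 < \<mu>" "\<mu> \<le> lam" "0 < \<nu>" "\<nu> \<le> lam"
  shows "prox_val \<mu> + (prox_dist \<mu>)\<^sup>2 / (2 * \<mu>) \<le> prox_val \<nu> + (prox_dist \<nu>)\<^sup>2 / (2 * \<mu>)"
  using prox_minimizes[OF assms(1) mult_alpha_lt_one[OF assms(1,2)], where x = x and z = "prox_pt \<nu>"]
    f_prox_pt[OF assms(1,2)] f_prox_pt[OF assms(3,4)]
  unfolding prox_dist_def prox_pt_def by simp

lemma prox_val_dist_le_start:
  assumes "0 < \<mu>" "\<mu> \<le> lam"
  shows "prox_val \<mu> + (prox_dist \<mu>)\<^sup>2 / (2 * \<mu>) \<le> real_of_ereal (f x)"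
proof -
  have "f (prox_pt \<mu>) + ereal ((prox_dist \<mu>)\<^sup>2 / (2 * \<mu>)) \<le> f x + ereal ((norm (x - x))\<^sup>2 / (2 * \<mu>))"
    using prox_minimizes[OF assms(1) mult_alpha_lt_one[OF assms]] unfolding prox_dist_def prox_pt_def .
  then show ?thesis using f_prox_pt[OF assms] f_start by (metis diff_self norm_zero ereal_less_eq(3)
        plus_ereal.simps(1) zero_power2 div_0 add_0_right)
qed

lemma prox_val_diff_bounds:
  assumes "0 < \<mu>" "\<mu> < \<nu>" "\<nu> \<le> lam"
  shows "((prox_dist \<nu>)\<^sup>2 - (prox_dist \<mu>)\<^sup>2) / (2 * \<nu>) \<le> prox_val \<mu> - prox_val \<nu>"
    and "prox_val \<mu> - prox_val \<nu> \<le> ((prox_dist \<nu>)\<^sup>2 - (prox_dist \<mu>)\<^sup>2) / (2 * \<mu>)"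
proof -
  have "prox_val \<nu> + (prox_dist \<nu>)\<^sup>2 / (2 * \<nu>) \<le> prox_val \<mu> + (prox_dist \<mu>)\<^sup>2 / (2 * \<nu>)"
    "prox_val \<mu> + (prox_dist \<mu>)\<^sup>2 / (2 * \<mu>) \<le> prox_val \<nu> + (prox_dist \<nu>)\<^sup>2 / (2 * \<mu>)"
    using prox_val_dist_le assms by auto
  then show "((prox_dist \<nu>)\<^sup>2 - (prox_dist \<mu>)\<^sup>2) / (2 * \<nu>) \<le> prox_val \<mu> - prox_val \<nu>"
    and "prox_val \<mu> - prox_val \<nu> \<le> ((prox_dist \<nu>)\<^sup>2 - (prox_dist \<mu>)\<^sup>2) / (2 * \<mu>)"
    unfolding diff_divide_distrib by linarith+
qed

lemma prox_dist_mono: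
  assumes "0 < \<mu>" "\<mu> \<le> \<nu>" "\<nu> \<le> lam"
  shows "prox_dist \<mu> \<le> prox_dist \<nu>"
proof (cases "\<mu> = \<nu>")
  case False
  then have "\<mu> < \<nu>" using assms(2) by simp
  define X where "X = (prox_dist \<nu>)\<^sup>2 - (prox_dist \<mu>)\<^sup>2"
  have le: "X / (2 * \<nu>) \<le> X / (2 * \<mu>)"
    using prox_val_diff_bounds[OF assms(1) \<open>\<mu> < \<nu>\<close> assms(3)] unfolding X_def by linarith
  have "0 \<le> X"
  proof (rule ccontr)
    assume "\<not> 0 \<le> X"
    then have "X / (2 * \<mu>) < X / (2 * \<nu>)"
      using assms(1) \<open>\<mu> < \<nu>\<close> by (intro divide_strict_left_mono_neg) simp_all
    with le show False by simp
  qed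
  then have "(prox_dist \<mu>)\<^sup>2 \<le> (prox_dist \<nu>)\<^sup>2" unfolding X_def by simp
  then show ?thesis by (rule power2_le_imp_le) (simp add: prox_dist_def)
qed simp

lemma prox_val_antimono:
  assumes "0 < \<mu>" "\<mu> \<le> \<nu>" "\<nu> \<le> lam"
  shows "prox_val \<nu> \<le> prox_val \<mu>"
proof (cases "\<mu> = \<nu>")
  case False
  have "(prox_dist \<mu>)\<^sup>2 \<le> (prox_dist \<nu>)\<^sup>2"
    using prox_dist_mono[OF assms] by (intro power_mono) (auto simp: prox_dist_def)
  then have "0 \<le> ((prox_dist \<nu>)\<^sup>2 - (prox_dist \<mu>)\<^sup>2) / (2 * \<nu>)" using assms by simp
  then show ?thesis using prox_val_diff_bounds(1)[of \<mu> \<nu>] assms False by simp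
qed simp

lemma prox_val_le_start:
  assumes "0 < \<mu>" "\<mu> \<le> lam"
  shows "prox_val \<mu> \<le> real_of_ereal (f x)"
proof -
  have "0 \<le> (prox_dist \<mu>)\<^sup>2 / (2 * \<mu>)" using assms by simp
  then show ?thesis using prox_val_dist_le_start[OF assms] by linarith
qed

lemma prox_subgradient:
  assumes "0 < \<nu>" "\<nu> \<le> lam"
  shows "ereal (prox_val \<nu> + inner ((1 / \<nu>) *\<^sub>R (x - prox_pt \<nu>)) (z - prox_pt \<nu>)
                 - \<alpha> / 2 * (norm (z - prox_pt \<nu>))\<^sup>2) \<le> f z"
  using prox_subgradient_ineq[OF assms(1) mult_alpha_lt_one[OF assms]] unfolding prox_val_def prox_pt_def .

lemma prox_step_bounds:
  assumes \<mu>\<nu>: "0 < \<mu>" "\<mu> < \<nu>" "\<nu> \<le> lam"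
  shows "norm (prox_pt \<nu> - prox_pt \<mu>) \<le> (\<nu> - \<mu>) * prox_dist \<mu> / (\<mu> * (1 - \<alpha> * \<nu>))"
    and "prox_dist \<nu> / \<nu> * (prox_dist \<nu> - prox_dist \<mu>) - \<alpha> / 2 * (norm (prox_pt \<nu> - prox_pt \<mu>))\<^sup>2
           \<le> prox_val \<mu> - prox_val \<nu>"
proof -
  define w where "w = x - prox_pt \<mu>"
  define w' where "w' = x - prox_pt \<nu>"
  have \<mu>: "0 < \<mu>" "\<mu> \<le> lam" and \<nu>: "0 < \<nu>" "\<nu> \<le> lam" using \<mu>\<nu> by auto
  have d: "prox_pt \<mu> - prox_pt \<nu> = w' - w" "prox_pt \<nu> - prox_pt \<mu> = w - w'"
    "prox_dist \<mu> = norm w" "prox_dist \<nu> = norm w'"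
    unfolding w_def w'_def prox_dist_def by (simp_all add: norm_minus_commute)
  have h1: "prox_val \<nu> + inner ((1 / \<nu>) *\<^sub>R w') (w' - w) - \<alpha> / 2 * (norm (w' - w))\<^sup>2 \<le> prox_val \<mu>"
    using prox_subgradient[OF \<nu>, of "prox_pt \<mu>"] f_prox_pt[OF \<mu>] unfolding d(1) w'_def[symmetric] by simp
  have h2: "prox_val \<mu> + inner ((1 / \<mu>) *\<^sub>R w) (w - w') - \<alpha> / 2 * (norm (w - w'))\<^sup>2 \<le> prox_val \<nu>"
    using prox_subgradient[OF \<mu>, of "prox_pt \<nu>"] f_prox_pt[OF \<nu>] unfolding d(2) w_def[symmetric] by simp
  have "\<alpha> * \<nu> < 1" using mult_alpha_lt_one[OF \<nu>] by (simp add: mult.commute)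
  note bounds = subgradient_pair_bounds[OF h1 h2 \<mu>\<nu>(1,2) this]
  have "norm (prox_pt \<nu> - prox_pt \<mu>) = norm (w' - w)" unfolding d(2) by (rule norm_minus_commute)
  then show "norm (prox_pt \<nu> - prox_pt \<mu>) \<le> (\<nu> - \<mu>) * prox_dist \<mu> / (\<mu> * (1 - \<alpha> * \<nu>))"
    and "prox_dist \<nu> / \<nu> * (prox_dist \<nu> - prox_dist \<mu>) - \<alpha> / 2 * (norm (prox_pt \<nu> - prox_pt \<mu>))\<^sup>2
           \<le> prox_val \<mu> - prox_val \<nu>"
    using bounds unfolding d(3,4) by simp_all
qed

end

lemma class_K_deriv_pos:
  assumes "class_K r0 \<phi>" "0 < t" "t < r0"
  shows "0 < deriv \<phi> t"
  using assms unfolding class_K_def by auto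

lemma class_K_has_real_derivative:
  assumes "class_K r0 \<phi>" "0 < t" "t < r0"
  shows "(\<phi> has_real_derivative deriv \<phi> t) (at t)"
  using assms DERIV_deriv_iff_real_differentiable unfolding class_K_def by auto

lemma class_K_mono:
  assumes K: "class_K r0 \<phi>" and st: "0 < s" "s \<le> t" "t < r0"
  shows "\<phi> s \<le> \<phi> t"
proof (cases "s = t")
  case False
  then obtain z where z: "s < z" "z < t" "\<phi> t - \<phi> s = (t - s) * deriv \<phi> z"
    using MVT2[of s t \<phi> "deriv \<phi>"] class_K_has_real_derivative[OF K] st by force
  then have "0 < deriv \<phi> z" using class_K_deriv_pos[OF K] st by simp
  then have "0 \<le> (t - s) * deriv \<phi> z" using z by simp
  then show ?thesis using z(3) by simp
qed simp

lemma Liminf_nonneg_if_eventually_ge: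
  fixes g :: "'a \<Rightarrow> ereal"
  assumes "\<And>\<epsilon>. \<epsilon> > 0 \<Longrightarrow> \<forall>\<^sub>F y in F. ereal (- \<epsilon>) \<le> g y"
  shows "0 \<le> Liminf F g"
  unfolding le_Liminf_iff
proof (intro allI impI)
  fix e :: ereal assume "e < 0"
  then obtain z where z: "e < ereal z" "ereal z < 0" using ereal_dense2 by blast
  have "\<forall>\<^sub>F y in F. ereal (- (- z)) \<le> g y" using assms[of "-z"] z by simp
  then show "\<forall>\<^sub>F y in F. e < g y" by eventually_elim (use z in auto)
qed

text \<open>Only a lower bound on \<open>s - c\<close> is available; for large \<open>s\<close> monotonicity of \<open>\<phi>\<close> takes over
  from the derivative.\<close>

lemma monotone_deriv_lower_estimate:
  fixes \<phi> :: "real \<Rightarrow> real"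
  assumes der: "(\<phi> has_real_derivative d) (at c)" and d: "0 < d" and cr: "c < r" and e: "0 < e"
    and mono: "\<And>s t. c \<le> s \<Longrightarrow> s \<le> t \<Longrightarrow> t < r \<Longrightarrow> \<phi> s \<le> \<phi> t"
  obtains \<eta> where "0 < \<eta>"
    "\<And>q s. \<bar>q\<bar> < \<eta> \<Longrightarrow> q \<le> s - c \<Longrightarrow> s < r \<Longrightarrow> d * q - e * \<bar>q\<bar> \<le> \<phi> s - \<phi> c"
proof -
  define e' where "e' = min e d"
  have e': "0 < e'" "e' \<le> e" "e' \<le> d" unfolding e'_def using e d by auto
  obtain \<eta>0 where \<eta>0: "0 < \<eta>0" "\<And>s. \<bar>s - c\<bar> < \<eta>0 \<Longrightarrow> \<bar>\<phi> s - \<phi> c - d * (s - c)\<bar> \<le> e' * \<bar>s - c\<bar>"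
    using der e'(1) unfolding has_field_derivative_def has_derivative_at_alt by force
  define \<eta> where "\<eta> = min (\<eta>0 / 2) ((r - c) / 2)"
  have "\<eta> \<le> (r - c) / 2" unfolding \<eta>_def by (rule min.cobounded2)
  then have \<eta>: "0 < \<eta>" "\<eta> < \<eta>0" "c + \<eta> < r" unfolding \<eta>_def using \<eta>0(1) cr by auto
  have "d * q - e * \<bar>q\<bar> \<le> \<phi> s - \<phi> c" if q: "\<bar>q\<bar> < \<eta>" "q \<le> s - c" and s: "s < r" for q s
  proof -
    have "d * q - e * \<bar>q\<bar> \<le> d * q - e' * \<bar>q\<bar>" using e'(2) by (simp add: mult_right_mono)
    also have "\<dots> \<le> \<phi> s - \<phi> c"
    proof (cases "c \<le> s")
      case True
      define m where "m = min (s - c) \<eta>"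
      have m: "0 \<le> m" "m < \<eta>0" "q \<le> m" "c + m \<le> s" unfolding m_def using True q \<eta> by auto
      have "d * q - e' * \<bar>q\<bar> \<le> (d - e') * q" using e'(1) by (simp add: algebra_simps mult_left_mono)
      also have "\<dots> \<le> (d - e') * m" using m(3) e'(3) by (intro mult_left_mono) auto
      also have "\<dots> \<le> \<phi> (c + m) - \<phi> c" using \<eta>0(2)[of "c + m"] m by (simp add: abs_le_iff algebra_simps)
      also have "\<phi> (c + m) \<le> \<phi> s" using mono[of "c + m" s] m s by simp
      finally show ?thesis by simp
    next
      case False
      then have "(d + e') * q \<le> (d + e') * (s - c)" using q(2) e'(1) d by (intro mult_left_mono) auto
      also have "\<dots> \<le> \<phi> s - \<phi> c"
        using \<eta>0(2)[of s] False q \<eta> by (simp add: abs_le_iff algebra_simps)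
      finally show ?thesis using False q(2) by (simp add: abs_if algebra_simps)
    qed
    finally show ?thesis .
  qed
  with \<eta>(1) show ?thesis by (rule that)
qed

lemma comp_K_diff_quotient_lower_bound:
  fixes f :: "'a::real_inner \<Rightarrow> ereal"
  assumes minor: "\<And>z. ereal (c + inner v (z - p) - K * (norm (z - p))\<^sup>2) \<le> f z"
    and K: "0 \<le> K" and fp: "f p = ereal c" and c: "0 \<le> c" "c < r0" and d: "0 \<le> d" and e: "0 \<le> e"
    and est: "\<And>q s. \<bar>q\<bar> < \<eta> \<Longrightarrow> q \<le> s - c \<Longrightarrow> s < r0 \<Longrightarrow> d * q - e * \<bar>q\<bar> \<le> \<phi> s - \<phi> c"
    and y: "0 < norm (y - p)" "norm (y - p) \<le> 1" "(norm v + K) * norm (y - p) < \<eta>"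
  shows "ereal (- (e * (norm v + K) + d * K * norm (y - p)))
           \<le> (comp_K r0 \<phi> f y - comp_K r0 \<phi> f p - ereal (inner (d *\<^sub>R v) (y - p))) / ereal (norm (y - p))"
proof -
  define n where "n = norm (y - p)"
  define q where "q = inner v (y - p) - K * n\<^sup>2"
  have gp: "comp_K r0 \<phi> f p = ereal (\<phi> c)" unfolding comp_K_def using fp c by simp
  have "\<bar>inner v (y - p)\<bar> \<le> norm v * n" unfolding n_def by (rule Cauchy_Schwarz_ineq2)
  moreover have "K * n\<^sup>2 \<le> K * n" using y K unfolding n_def by (simp add: power2_eq_square mult_left_mono)
  moreover have "0 \<le> K * n\<^sup>2" using K by simp
  ultimately have qn: "\<bar>q\<bar> \<le> (norm v + K) * n" unfolding q_def by (simp add: abs_le_iff algebra_simps)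
  show ?thesis
  proof (cases "0 \<le> f y \<and> f y < ereal r0")
    case False
    then have "comp_K r0 \<phi> f y = \<infinity>" unfolding comp_K_def by simp
    then show ?thesis unfolding gp using y(1) by simp
  next
    case True
    then obtain s where s: "f y = ereal s" "0 \<le> s" "s < r0" by (cases "f y") auto
    have "q \<le> s - c" using minor[of y] s unfolding q_def n_def by simp
    then have "d * q - e * \<bar>q\<bar> \<le> \<phi> s - \<phi> c" using est qn y(3) s(3) unfolding n_def by force
    moreover have "e * \<bar>q\<bar> \<le> e * ((norm v + K) * n)" using qn e by (rule mult_left_mono)
    moreover have "d * K * n\<^sup>2 \<le> d * K * n * n" by (simp add: power2_eq_square)
    ultimately have "- (e * (norm v + K) + d * K * n) * n \<le> \<phi> s - \<phi> c - inner (d *\<^sub>R v) (y - p)"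
      unfolding q_def by (simp add: algebra_simps)
    then have "- (e * (norm v + K) + d * K * n) \<le> (\<phi> s - \<phi> c - inner (d *\<^sub>R v) (y - p)) / n"
      using y(1) unfolding n_def by (simp add: field_simps)
    moreover have "comp_K r0 \<phi> f y = ereal (\<phi> s)" unfolding comp_K_def using s by simp
    ultimately show ?thesis unfolding gp n_def using y(1) by simp
  qed
qed

lemma frechet_subdiff_comp_K_of_minorant:
  fixes f :: "'a::real_inner \<Rightarrow> ereal"
  assumes minor: "\<And>z. ereal (c + inner v (z - p) - K * (norm (z - p))\<^sup>2) \<le> f z"
    and K: "0 \<le> K" and fp: "f p = ereal c" and c: "0 \<le> c" "c < r0"
    and der: "(\<phi> has_real_derivative d) (at c)" and d: "0 < d"
    and mono: "\<And>s t. c \<le> s \<Longrightarrow> s \<le> t \<Longrightarrow> t < r0 \<Longrightarrow> \<phi> s \<le> \<phi> t"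
  shows "d *\<^sub>R v \<in> frechet_subdiff (comp_K r0 \<phi> f) p"
proof -
  define Q where "Q y = (comp_K r0 \<phi> f y - comp_K r0 \<phi> f p - ereal (inner (d *\<^sub>R v) (y - p)))
                          / ereal (norm (y - p))" for y
  have "\<forall>\<^sub>F y in at p. ereal (- \<epsilon>) \<le> Q y" if \<epsilon>: "0 < \<epsilon>" for \<epsilon>
  proof -
    define N where "N = norm v + K + 1"
    have N: "0 < N" unfolding N_def using K by (simp add: add_nonneg_pos)
    obtain \<eta> where \<eta>: "0 < \<eta>"
      "\<And>q s. \<bar>q\<bar> < \<eta> \<Longrightarrow> q \<le> s - c \<Longrightarrow> s < r0 \<Longrightarrow> d * q - \<epsilon> / (2 * N) * \<bar>q\<bar> \<le> \<phi> s - \<phi> c"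
      using monotone_deriv_lower_estimate[OF der d c(2), of "\<epsilon> / (2 * N)"] \<epsilon> N mono by auto
    define \<rho> where "\<rho> = min 1 (min (\<eta> / N) (\<epsilon> / (2 * (d * K + 1))))"
    have dK: "0 < d * K + 1" using d K by (simp add: add_nonneg_pos)
    have \<rho>: "0 < \<rho>" "\<rho> \<le> 1" "N * \<rho> \<le> \<eta>" "d * K * \<rho> \<le> \<epsilon> / 2"
    proof -
      show "0 < \<rho>" "\<rho> \<le> 1" unfolding \<rho>_def using \<eta> \<epsilon> N dK by auto
      have "\<rho> \<le> \<eta> / N" unfolding \<rho>_def by simp
      then show "N * \<rho> \<le> \<eta>" using N by (simp add: pos_le_divide_eq mult.commute)
      have "d * K * \<rho> \<le> (d * K + 1) * (\<epsilon> / (2 * (d * K + 1)))"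
        unfolding \<rho>_def using d K \<epsilon> dK \<eta> N by (intro mult_mono) (auto simp: min_le_iff_disj)
      also have "\<dots> = \<epsilon> / 2" using dK by (simp add: field_simps)
      finally show "d * K * \<rho> \<le> \<epsilon> / 2" .
    qed
    have "ereal (- \<epsilon>) \<le> Q y" if y: "y \<noteq> p" "dist y p < \<rho>" for y
    proof -
      have n: "0 < norm (y - p)" "norm (y - p) < \<rho>" using y by (auto simp: dist_norm)
      have "(norm v + K) * norm (y - p) \<le> N * norm (y - p)" unfolding N_def using n by (intro mult_right_mono) auto
      also have "\<dots> < N * \<rho>" using N n by simp
      finally have "(norm v + K) * norm (y - p) < N * \<rho>" .
      then have lb: "ereal (- (\<epsilon> / (2 * N) * (norm v + K) + d * K * norm (y - p))) \<le> Q y"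
        unfolding Q_def using \<rho> n \<epsilon> N d
        by (intro comp_K_diff_quotient_lower_bound[where \<phi> = \<phi> and d = d and e = "\<epsilon> / (2 * N)",
              OF minor K fp c _ _ \<eta>(2)]) auto
      have "\<epsilon> / (2 * N) * (norm v + K) \<le> \<epsilon> / 2"
        using N \<epsilon> K unfolding N_def by (simp add: field_simps)
      moreover have "d * K * norm (y - p) \<le> d * K * \<rho>" using n d K by (intro mult_left_mono) auto
      ultimately have "ereal (- \<epsilon>) \<le> ereal (- (\<epsilon> / (2 * N) * (norm v + K) + d * K * norm (y - p)))"
        using \<rho>(4) by simp
      then show ?thesis using lb by (rule order_trans)
    qed
    then show ?thesis unfolding eventually_at using \<rho>(1) by blast
  qed
  then have "0 \<le> Liminf (at p) Q" by (rule Liminf_nonneg_if_eventually_ge)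
  then show ?thesis unfolding frechet_subdiff_def Q_def using fp c by (simp add: comp_K_def)
qed

lemma le_of_local_increment_bound:
  fixes D :: "real \<Rightarrow> real"
  assumes a: "a0 \<le> a1"
    and local: "\<And>\<epsilon>. 0 < \<epsilon> \<Longrightarrow> \<exists>\<delta>>0. \<forall>\<mu> \<nu>. a0 \<le> \<mu> \<longrightarrow> \<mu> < \<nu> \<longrightarrow> \<nu> \<le> a1 \<longrightarrow> \<nu> - \<mu> < \<delta>
                              \<longrightarrow> D \<nu> \<le> D \<mu> + \<epsilon> * (\<nu> - \<mu>)"
  shows "D a1 \<le> D a0"
proof (cases "a0 = a1")
  case False
  then have a: "a0 < a1" using a by simp
  have "D a1 \<le> D a0 + \<epsilon> * (a1 - a0)" if \<epsilon>: "0 < \<epsilon>" for \<epsilon>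
  proof -
    obtain \<delta> where \<delta>: "0 < \<delta>"
      "\<And>\<mu> \<nu>. a0 \<le> \<mu> \<Longrightarrow> \<mu> < \<nu> \<Longrightarrow> \<nu> \<le> a1 \<Longrightarrow> \<nu> - \<mu> < \<delta> \<Longrightarrow> D \<nu> \<le> D \<mu> + \<epsilon> * (\<nu> - \<mu>)"
      using local[OF \<epsilon>] by blast
    obtain n :: nat where n: "(a1 - a0) / \<delta> < n" using reals_Archimedean2 by blast
    then have n0: "0 < real n" using a \<delta>(1) by (smt (verit) divide_pos_pos)
    define h where "h = (a1 - a0) / n"
    have h: "0 < h" "h < \<delta>" "real n * h = a1 - a0"
      using a n0 n \<delta>(1) unfolding h_def by (auto simp: field_simps)
    have "k \<le> n \<Longrightarrow> D (a0 + k * h) \<le> D a0 + \<epsilon> * (k * h)" for k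
    proof (induction k)
      case (Suc k)
      have "real (Suc k) * h \<le> real n * h" using Suc.prems h by (intro mult_right_mono) auto
      then have "D (a0 + Suc k * h) \<le> D (a0 + k * h) + \<epsilon> * h"
        using \<delta>(2)[of "a0 + k * h" "a0 + Suc k * h"] h by (auto simp: algebra_simps)
      then show ?case using Suc by (simp add: algebra_simps)
    qed simp
    from this[of n] show ?thesis using h(3) by simp
  qed
  note bound = this
  show ?thesis
  proof (rule field_le_epsilon)
    fix e :: real assume "0 < e"
    then show "D a1 \<le> D a0 + e" using bound[of "e / (a1 - a0)"] a by simp
  qed
qed simp

lemma le_of_local_quadratic_increment_bound:
  fixes D :: "real \<Rightarrow> real"
  assumes a: "a0 \<le> a1" and K: "0 \<le> K"
    and local: "\<And>\<epsilon>. 0 < \<epsilon> \<Longrightarrow> \<exists>\<delta>>0. \<forall>\<mu> \<nu>. a0 \<le> \<mu> \<longrightarrow> \<mu> < \<nu> \<longrightarrow> \<nu> \<le> a1 \<longrightarrow> \<nu> - \<mu> < \<delta>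
                              \<longrightarrow> D \<nu> \<le> D \<mu> + \<epsilon> * (\<nu> - \<mu>) + K * (\<nu> - \<mu>)\<^sup>2"
  shows "D a1 \<le> D a0"
proof (rule le_of_local_increment_bound[OF a])
  fix \<epsilon> :: real assume \<epsilon>: "0 < \<epsilon>"
  obtain \<delta> where \<delta>: "0 < \<delta>" "\<And>\<mu> \<nu>. a0 \<le> \<mu> \<Longrightarrow> \<mu> < \<nu> \<Longrightarrow> \<nu> \<le> a1 \<Longrightarrow> \<nu> - \<mu> < \<delta>
      \<Longrightarrow> D \<nu> \<le> D \<mu> + \<epsilon> / 2 * (\<nu> - \<mu>) + K * (\<nu> - \<mu>)\<^sup>2"
    using local[of "\<epsilon> / 2"] \<epsilon> by auto
  define \<delta>' where "\<delta>' = min \<delta> (\<epsilon> / (2 * (K + 1)))"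
  have "D \<nu> \<le> D \<mu> + \<epsilon> * (\<nu> - \<mu>)" if \<mu>\<nu>: "a0 \<le> \<mu>" "\<mu> < \<nu>" "\<nu> \<le> a1" "\<nu> - \<mu> < \<delta>'" for \<mu> \<nu>
  proof -
    have "K * (\<nu> - \<mu>) \<le> (K + 1) * (\<epsilon> / (2 * (K + 1)))"
      using \<mu>\<nu> K unfolding \<delta>'_def by (intro mult_mono) auto
    also have "\<dots> = \<epsilon> / 2" using K by (simp add: field_simps)
    finally have "K * (\<nu> - \<mu>) * (\<nu> - \<mu>) \<le> \<epsilon> / 2 * (\<nu> - \<mu>)" using \<mu>\<nu> by (intro mult_right_mono) auto
    moreover have "\<nu> - \<mu> < \<delta>" using \<mu>\<nu>(4) unfolding \<delta>'_def by simp
    then have "D \<nu> \<le> D \<mu> + \<epsilon> / 2 * (\<nu> - \<mu>) + K * (\<nu> - \<mu>) * (\<nu> - \<mu>)"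
      using \<delta>(2)[OF \<mu>\<nu>(1-3)] by (simp add: power2_eq_square mult.assoc)
    ultimately show ?thesis by linarith
  qed
  moreover have "0 < \<delta>'" unfolding \<delta>'_def using \<delta>(1) \<epsilon> K by simp
  ultimately show "\<exists>\<delta>>0. \<forall>\<mu> \<nu>. a0 \<le> \<mu> \<longrightarrow> \<mu> < \<nu> \<longrightarrow> \<nu> \<le> a1 \<longrightarrow> \<nu> - \<mu> < \<delta> \<longrightarrow> D \<nu> \<le> D \<mu> + \<epsilon> * (\<nu> - \<mu>)"
    by blast
qed

lemma uniform_increment_lower_bound:
  fixes \<phi> \<phi>' :: "real \<Rightarrow> real"
  assumes der: "\<And>t. t \<in> {lo..hi} \<Longrightarrow> (\<phi> has_real_derivative \<phi>' t) (at t)"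
    and cont: "continuous_on {lo..hi} \<phi>'" and \<epsilon>: "0 < \<epsilon>"
  obtains \<delta> where "0 < \<delta>"
    "\<And>s t. lo \<le> s \<Longrightarrow> s \<le> t \<Longrightarrow> t \<le> hi \<Longrightarrow> t - s < \<delta> \<Longrightarrow> (t - s) * (\<phi>' s - \<epsilon>) \<le> \<phi> t - \<phi> s"
proof -
  obtain \<delta> where \<delta>: "0 < \<delta>"
    "\<And>s z. s \<in> {lo..hi} \<Longrightarrow> z \<in> {lo..hi} \<Longrightarrow> dist z s < \<delta> \<Longrightarrow> dist (\<phi>' z) (\<phi>' s) < \<epsilon>"
    using compact_uniformly_continuous[OF cont compact_Icc] \<epsilon> unfolding uniformly_continuous_on_def by metis
  have "(t - s) * (\<phi>' s - \<epsilon>) \<le> \<phi> t - \<phi> s"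
    if st: "lo \<le> s" "s \<le> t" "t \<le> hi" "t - s < \<delta>" for s t
  proof (cases "s = t")
    case False
    then obtain z where z: "s < z" "z < t" "\<phi> t - \<phi> s = (t - s) * \<phi>' z"
      using MVT2[of s t \<phi> \<phi>'] der st by force
    then have "dist (\<phi>' z) (\<phi>' s) < \<epsilon>" using \<delta>(2)[of s z] st by (auto simp: dist_real_def)
    then have "\<phi>' s - \<epsilon> \<le> \<phi>' z" by (simp add: dist_real_def abs_less_iff)
    then show ?thesis using z st by (simp add: mult_left_mono)
  qed simp
  with \<delta>(1) show ?thesis by (rule that)
qed

lemma descent_step_estimate:
  fixes d e s db dF d\<phi> C h S L D :: real
  assumes incr: "dF * d \<le> d\<phi>" and decr: "s * db - C * h\<^sup>2 \<le> dF" and slope: "1 \<le> (d + e) * s"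
    and "0 \<le> d" "d \<le> D" "0 \<le> e" "0 \<le> s" "s \<le> S" "0 \<le> db" "db \<le> L * h" "0 \<le> C"
  shows "db \<le> d\<phi> + e * (S * L) * h + D * C * h * h"
proof -
  have "(s * db - C * h\<^sup>2) * d \<le> dF * d" using decr \<open>0 \<le> d\<close> by (rule mult_right_mono)
  moreover have "db - e * s * db \<le> d * s * db"
    using slope \<open>0 \<le> db\<close> mult_right_mono[of 1 "(d + e) * s" db] by (simp add: algebra_simps)
  moreover have "e * s * db \<le> e * (S * L) * h"
    using assms(6-10) by (simp add: mult.assoc mult_left_mono mult_mono)
  moreover have "C * h\<^sup>2 * d \<le> D * C * h * h"
    using assms(4,5,11) mult_left_mono[of d D "C * h\<^sup>2"] by (simp add: power2_eq_square algebra_simps)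
  ultimately show ?thesis using incr by (simp add: algebra_simps)
qed

text \<open>On each short step the decrease of \<open>F\<close> pays, through the slope bound \<open>\<phi>'(F) s \<ge> 1\<close>,
  for the increase of \<open>b\<close>; the errors are \<open>o(\<nu> - \<mu>)\<close> by uniform continuity of \<open>\<phi>'\<close>.\<close>

lemma descent_of_slope_bound:
  fixes F b s \<phi> \<phi>' :: "real \<Rightarrow> real"
  assumes a: "a0 \<le> a1"
    and F_range: "\<And>\<mu>. a0 \<le> \<mu> \<Longrightarrow> \<mu> \<le> a1 \<Longrightarrow> F \<mu> \<in> {lo..hi}"
    and der: "\<And>t. t \<in> {lo..hi} \<Longrightarrow> (\<phi> has_real_derivative \<phi>' t) (at t)"
    and cont: "continuous_on {lo..hi} \<phi>'"
    and pos: "\<And>t. t \<in> {lo..hi} \<Longrightarrow> 0 < \<phi>' t"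
    and slope: "\<And>\<nu>. a0 \<le> \<nu> \<Longrightarrow> \<nu> \<le> a1 \<Longrightarrow> 1 \<le> \<phi>' (F \<nu>) * s \<nu>"
    and s_bound: "\<And>\<nu>. a0 \<le> \<nu> \<Longrightarrow> \<nu> \<le> a1 \<Longrightarrow> 0 \<le> s \<nu> \<and> s \<nu> \<le> S"
    and decrease: "\<And>\<mu> \<nu>. a0 \<le> \<mu> \<Longrightarrow> \<mu> < \<nu> \<Longrightarrow> \<nu> \<le> a1 \<Longrightarrow>
                     s \<nu> * (b \<nu> - b \<mu>) - C * (\<nu> - \<mu>)\<^sup>2 \<le> F \<mu> - F \<nu>"
    and b_lip: "\<And>\<mu> \<nu>. a0 \<le> \<mu> \<Longrightarrow> \<mu> < \<nu> \<Longrightarrow> \<nu> \<le> a1 \<Longrightarrow> 0 \<le> b \<nu> - b \<mu> \<and> b \<nu> - b \<mu> \<le> L * (\<nu> - \<mu>)"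
    and F_lip: "\<And>\<mu> \<nu>. a0 \<le> \<mu> \<Longrightarrow> \<mu> < \<nu> \<Longrightarrow> \<nu> \<le> a1 \<Longrightarrow> 0 \<le> F \<mu> - F \<nu> \<and> F \<mu> - F \<nu> \<le> M * (\<nu> - \<mu>)"
    and C: "0 \<le> C" and L: "0 \<le> L" and M: "0 \<le> M" and S: "0 \<le> S"
  shows "\<phi> (F a1) + b a1 \<le> \<phi> (F a0) + b a0"
proof -
  have ne: "{lo..hi} \<noteq> {}" using F_range[of a0] a by auto
  obtain tm where tm: "tm \<in> {lo..hi}" "\<And>t. t \<in> {lo..hi} \<Longrightarrow> \<phi>' tm \<le> \<phi>' t"
    using continuous_attains_inf[OF compact_Icc ne cont] by blast
  obtain tM where tM: "\<And>t. t \<in> {lo..hi} \<Longrightarrow> \<phi>' t \<le> \<phi>' tM"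
    using continuous_attains_sup[OF compact_Icc ne cont] by blast
  define m where "m = \<phi>' tm"
  have m: "0 < m" unfolding m_def using pos tm(1) by blast
  have M\<phi>: "0 \<le> \<phi>' tM" using tM[OF tm(1)] pos[OF tm(1)] by simp
  have C\<phi>: "0 \<le> \<phi>' tM * C" using M\<phi> C by simp
  show ?thesis
  proof (rule le_of_local_quadratic_increment_bound[OF a C\<phi>, of "\<lambda>\<mu>. \<phi> (F \<mu>) + b \<mu>"])
    fix \<epsilon> :: real assume \<epsilon>: "0 < \<epsilon>"
    define \<epsilon>1 where "\<epsilon>1 = min m (\<epsilon> / (S * L + 1))"
    have SL: "0 < S * L + 1" using S L by (simp add: add_nonneg_pos)
    have \<epsilon>1: "0 < \<epsilon>1" "\<epsilon>1 \<le> m" "\<epsilon>1 * (S * L) \<le> \<epsilon>"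
    proof -
      show "0 < \<epsilon>1" "\<epsilon>1 \<le> m" unfolding \<epsilon>1_def using m \<epsilon> SL by auto
      have "\<epsilon>1 * (S * L) \<le> \<epsilon> / (S * L + 1) * (S * L + 1)"
        unfolding \<epsilon>1_def using S L SL \<epsilon> by (intro mult_mono) auto
      then show "\<epsilon>1 * (S * L) \<le> \<epsilon>" using SL by simp
    qed
    obtain \<delta>1 where \<delta>1: "0 < \<delta>1" "\<And>s t. lo \<le> s \<Longrightarrow> s \<le> t \<Longrightarrow> t \<le> hi \<Longrightarrow> t - s < \<delta>1 \<Longrightarrow>
        (t - s) * (\<phi>' s - \<epsilon>1) \<le> \<phi> t - \<phi> s"
      using uniform_increment_lower_bound[OF der cont \<epsilon>1(1)] by blast
    define \<delta> where "\<delta> = \<delta>1 / (M + 1)"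
    have \<delta>: "0 < \<delta>" "M * \<delta> < \<delta>1" unfolding \<delta>_def using \<delta>1 M by (auto simp: field_simps)
    have "\<phi> (F \<nu>) + b \<nu> \<le> \<phi> (F \<mu>) + b \<mu> + \<epsilon> * (\<nu> - \<mu>) + \<phi>' tM * C * (\<nu> - \<mu>)\<^sup>2"
      if \<mu>\<nu>: "a0 \<le> \<mu>" "\<mu> < \<nu>" "\<nu> \<le> a1" "\<nu> - \<mu> < \<delta>" for \<mu> \<nu>
    proof -
      define h where "h = \<nu> - \<mu>"
      have h: "0 < h" "h < \<delta>" using \<mu>\<nu> unfolding h_def by auto
      have F\<mu>: "F \<mu> \<in> {lo..hi}" and F\<nu>: "F \<nu> \<in> {lo..hi}" using F_range \<mu>\<nu> by auto
      have "F \<mu> - F \<nu> \<le> M * \<delta>"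
        using F_lip[OF \<mu>\<nu>(1-3)] h M mult_left_mono[of h \<delta> M] unfolding h_def by linarith
      then have "(F \<mu> - F \<nu>) * (\<phi>' (F \<nu>) - \<epsilon>1) \<le> \<phi> (F \<mu>) - \<phi> (F \<nu>)"
        using \<delta>1(2)[of "F \<nu>" "F \<mu>"] F_lip[OF \<mu>\<nu>(1-3)] F\<mu> F\<nu> \<delta>(2) by auto
      then have "b \<nu> - b \<mu> \<le> \<phi> (F \<mu>) - \<phi> (F \<nu>) + \<epsilon>1 * (S * L) * h + \<phi>' tM * C * h * h"
        using decrease[OF \<mu>\<nu>(1-3)] slope[of \<nu>] s_bound[of \<nu>] b_lip[OF \<mu>\<nu>(1-3)] tm(2)[OF F\<nu>] tM[OF F\<nu>]
          \<epsilon>1 \<mu>\<nu> C h unfolding m_def h_def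
        by (intro descent_step_estimate[where d = "\<phi>' (F \<nu>) - \<epsilon>1" and e = \<epsilon>1 and s = "s \<nu>"
              and dF = "F \<mu> - F \<nu>" and db = "b \<nu> - b \<mu>"]) auto
      moreover have "\<epsilon>1 * (S * L) * h \<le> \<epsilon> * h" using \<epsilon>1(3) h by (intro mult_right_mono) auto
      ultimately show ?thesis unfolding h_def by (simp add: power2_eq_square algebra_simps)
    qed
    with \<delta>(1) show "\<exists>\<delta>>0. \<forall>\<mu> \<nu>. a0 \<le> \<mu> \<longrightarrow> \<mu> < \<nu> \<longrightarrow> \<nu> \<le> a1 \<longrightarrow> \<nu> - \<mu> < \<delta> \<longrightarrow>
        \<phi> (F \<nu>) + b \<nu> \<le> \<phi> (F \<mu>) + b \<mu> + \<epsilon> * (\<nu> - \<mu>) + \<phi>' tM * C * (\<nu> - \<mu>)\<^sup>2" by blast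
  qed
qed

context prox_path
begin

definition prox_lip :: "real \<Rightarrow> real" where
  "prox_lip \<mu>0 = prox_dist lam / (\<mu>0 * (1 - \<alpha> * lam))"

lemma prox_lip_nonneg: "0 < \<mu>0 \<Longrightarrow> 0 \<le> prox_lip \<mu>0"
  using lam_alpha unfolding prox_lip_def prox_dist_def by (simp add: mult.commute)

lemma prox_pt_lipschitz:
  assumes \<mu>: "0 < \<mu>0" "\<mu>0 \<le> \<mu>" "\<mu> < \<nu>" "\<nu> \<le> lam"
  shows "norm (prox_pt \<nu> - prox_pt \<mu>) \<le> prox_lip \<mu>0 * (\<nu> - \<mu>)"
proof -
  have "1 - \<alpha> * lam \<le> 1 - \<alpha> * \<nu>" using \<mu> alpha_nonneg by (simp add: mult_left_mono)
  moreover have "0 < 1 - \<alpha> * lam" using lam_alpha by (simp add: mult.commute)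
  ultimately have "\<mu>0 * (1 - \<alpha> * lam) \<le> \<mu> * (1 - \<alpha> * \<nu>)" using \<mu> by (intro mult_mono) auto
  moreover have "(\<nu> - \<mu>) * prox_dist \<mu> \<le> (\<nu> - \<mu>) * prox_dist lam"
    using prox_dist_mono[of \<mu> lam] \<mu> by (intro mult_left_mono) auto
  ultimately have "(\<nu> - \<mu>) * prox_dist \<mu> / (\<mu> * (1 - \<alpha> * \<nu>)) \<le> (\<nu> - \<mu>) * prox_dist lam / (\<mu>0 * (1 - \<alpha> * lam))"
    using \<mu> \<open>0 < 1 - \<alpha> * lam\<close> by (intro frac_le) (auto simp: prox_dist_def)
  with prox_step_bounds(1)[of \<mu> \<nu>] \<mu> show ?thesis unfolding prox_lip_def by (simp add: ac_simps)
qed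

lemma prox_dist_lipschitz:
  assumes "0 < \<mu>0" "\<mu>0 \<le> \<mu>" "\<mu> < \<nu>" "\<nu> \<le> lam"
  shows "prox_dist \<nu> - prox_dist \<mu> \<le> prox_lip \<mu>0 * (\<nu> - \<mu>)"
proof -
  have "prox_dist \<nu> - prox_dist \<mu> \<le> norm (prox_pt \<nu> - prox_pt \<mu>)"
    unfolding prox_dist_def using norm_triangle_ineq2[of "prox_pt \<nu> - x" "prox_pt \<mu> - x"] by simp
  then show ?thesis using prox_pt_lipschitz[OF assms] by simp
qed

lemma prox_val_lipschitz:
  assumes \<mu>: "0 < \<mu>0" "\<mu>0 \<le> \<mu>" "\<mu> < \<nu>" "\<nu> \<le> lam"
  shows "prox_val \<mu> - prox_val \<nu> \<le> prox_lip \<mu>0 * prox_dist lam / \<mu>0 * (\<nu> - \<mu>)"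
proof -
  have "((prox_dist \<nu>)\<^sup>2 - (prox_dist \<mu>)\<^sup>2) / (2 * \<mu>)
          = (prox_dist \<nu> - prox_dist \<mu>) * (prox_dist \<nu> + prox_dist \<mu>) / (2 * \<mu>)"
    by (simp add: power2_eq_square algebra_simps)
  also have "\<dots> \<le> (prox_lip \<mu>0 * (\<nu> - \<mu>)) * (2 * prox_dist lam) / (2 * \<mu>0)"
  proof (rule frac_le)
    show "(prox_dist \<nu> - prox_dist \<mu>) * (prox_dist \<nu> + prox_dist \<mu>) \<le> (prox_lip \<mu>0 * (\<nu> - \<mu>)) * (2 * prox_dist lam)"
      using prox_dist_lipschitz[OF \<mu>] prox_dist_mono[of \<mu> \<nu>] prox_dist_mono[of \<mu> lam] prox_dist_mono[of \<nu> lam] \<mu>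
      by (intro mult_mono) (auto simp: prox_dist_def)
  qed (use prox_lip_nonneg[of \<mu>0] \<mu> in \<open>auto simp: prox_dist_def\<close>)
  also have "\<dots> = prox_lip \<mu>0 * prox_dist lam / \<mu>0 * (\<nu> - \<mu>)" using \<mu> by (simp add: field_simps)
  finally show ?thesis using prox_val_diff_bounds(2)[of \<mu> \<nu>] \<mu> by simp
qed

lemma prox_slope_bound:
  assumes K: "class_K r0 \<phi>"
    and KL: "\<forall>y. 0 < f y \<and> f y < ereal r0 \<longrightarrow> minnorm (frechet_subdiff (comp_K r0 \<phi> f) y) \<ge> 1"
    and \<nu>: "0 < \<nu>" "\<nu> \<le> lam" and val: "0 < prox_val \<nu>" "prox_val \<nu> < r0"
  shows "1 \<le> deriv \<phi> (prox_val \<nu>) * (prox_dist \<nu> / \<nu>)"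
proof -
  define v where "v = (1 / \<nu>) *\<^sub>R (x - prox_pt \<nu>)"
  have "deriv \<phi> (prox_val \<nu>) *\<^sub>R v \<in> frechet_subdiff (comp_K r0 \<phi> f) (prox_pt \<nu>)"
  proof (rule frechet_subdiff_comp_K_of_minorant)
    show "\<And>z. ereal (prox_val \<nu> + inner v (z - prox_pt \<nu>) - \<alpha> / 2 * (norm (z - prox_pt \<nu>))\<^sup>2) \<le> f z"
      unfolding v_def by (rule prox_subgradient[OF \<nu>])
    show "\<And>s t. prox_val \<nu> \<le> s \<Longrightarrow> s \<le> t \<Longrightarrow> t < r0 \<Longrightarrow> \<phi> s \<le> \<phi> t"
      using class_K_mono[OF K] val(1) by force
  qed (use f_prox_pt[OF \<nu>] val alpha_nonneg class_K_has_real_derivative[OF K]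
      class_K_deriv_pos[OF K] in auto)
  then have "minnorm (frechet_subdiff (comp_K r0 \<phi> f) (prox_pt \<nu>))
               \<le> ereal (norm (deriv \<phi> (prox_val \<nu>) *\<^sub>R v))"
    unfolding minnorm_def by (rule INF_lower)
  moreover have "1 \<le> minnorm (frechet_subdiff (comp_K r0 \<phi> f) (prox_pt \<nu>))"
    using KL f_prox_pt[OF \<nu>] val by simp
  ultimately have "1 \<le> norm (deriv \<phi> (prox_val \<nu>) *\<^sub>R v)" by (metis order_trans one_ereal_def ereal_less_eq(3))
  also have "norm (deriv \<phi> (prox_val \<nu>) *\<^sub>R v) = deriv \<phi> (prox_val \<nu>) * (prox_dist \<nu> / \<nu>)"
    unfolding v_def prox_dist_def using class_K_deriv_pos[OF K val] \<nu>(1) by (simp add: norm_minus_commute)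
  finally show ?thesis .
qed

lemma prox_path_descent:
  assumes K: "class_K r0 \<phi>"
    and KL: "\<forall>y. 0 < f y \<and> f y < ereal r0 \<longrightarrow> minnorm (frechet_subdiff (comp_K r0 \<phi> f) y) \<ge> 1"
    and val_lam: "0 < prox_val lam" and start: "real_of_ereal (f x) < r0"
    and \<mu>0: "0 < \<mu>0" "\<mu>0 \<le> lam"
  shows "\<phi> (prox_val lam) + prox_dist lam \<le> \<phi> (prox_val \<mu>0) + prox_dist \<mu>0"
proof -
  define B where "B = prox_dist lam"
  have B: "0 \<le> B" unfolding B_def prox_dist_def by simp
  have range: "prox_val \<nu> \<in> {prox_val lam..real_of_ereal (f x)}" if "\<mu>0 \<le> \<nu>" "\<nu> \<le> lam" for \<nu>
    using prox_val_antimono[of \<nu> lam] prox_val_le_start[of \<nu>] that \<mu>0 by auto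
  have sub: "{prox_val lam..real_of_ereal (f x)} \<subseteq> {0<..<r0}" using val_lam start by auto
  show ?thesis
  proof (rule descent_of_slope_bound[where F = prox_val and b = prox_dist and \<phi> = \<phi> and \<phi>' = "deriv \<phi>"
        and lo = "prox_val lam" and hi = "real_of_ereal (f x)" and s = "\<lambda>\<nu>. prox_dist \<nu> / \<nu>"
        and S = "B / \<mu>0" and C = "\<alpha> / 2 * (prox_lip \<mu>0)\<^sup>2" and L = "prox_lip \<mu>0" and M = "prox_lip \<mu>0 * B / \<mu>0"])
    show "continuous_on {prox_val lam..real_of_ereal (f x)} (deriv \<phi>)"
      using K sub unfolding class_K_def by (blast intro: continuous_on_subset)
    show "(\<phi> has_real_derivative deriv \<phi> t) (at t)" if "t \<in> {prox_val lam..real_of_ereal (f x)}" for t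
      using that sub class_K_has_real_derivative[OF K] by auto
    show "0 < deriv \<phi> t" if "t \<in> {prox_val lam..real_of_ereal (f x)}" for t
      using that sub class_K_deriv_pos[OF K] by auto
    show "1 \<le> deriv \<phi> (prox_val \<nu>) * (prox_dist \<nu> / \<nu>)" if "\<mu>0 \<le> \<nu>" "\<nu> \<le> lam" for \<nu>
      using prox_slope_bound[OF K KL] range[OF that] sub that \<mu>0 by force
    show "0 \<le> prox_dist \<nu> / \<nu> \<and> prox_dist \<nu> / \<nu> \<le> B / \<mu>0" if "\<mu>0 \<le> \<nu>" "\<nu> \<le> lam" for \<nu>
      using prox_dist_mono[of \<nu> lam] that \<mu>0 B unfolding B_def
      by (auto simp: prox_dist_def intro!: frac_le)
    show "prox_dist \<nu> / \<nu> * (prox_dist \<nu> - prox_dist \<mu>) - \<alpha> / 2 * (prox_lip \<mu>0)\<^sup>2 * (\<nu> - \<mu>)\<^sup>2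
            \<le> prox_val \<mu> - prox_val \<nu>" if "\<mu>0 \<le> \<mu>" "\<mu> < \<nu>" "\<nu> \<le> lam" for \<mu> \<nu>
    proof -
      have "(norm (prox_pt \<nu> - prox_pt \<mu>))\<^sup>2 \<le> (prox_lip \<mu>0 * (\<nu> - \<mu>))\<^sup>2"
        using prox_pt_lipschitz[of \<mu>0 \<mu> \<nu>] that \<mu>0 by (simp add: power_mono)
      then have "\<alpha> / 2 * (norm (prox_pt \<nu> - prox_pt \<mu>))\<^sup>2 \<le> \<alpha> / 2 * (prox_lip \<mu>0)\<^sup>2 * (\<nu> - \<mu>)\<^sup>2"
        using alpha_nonneg by (simp add: mult_left_mono power_mult_distrib mult.assoc)
      then show ?thesis using prox_step_bounds(2)[of \<mu> \<nu>] that \<mu>0 by simp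
    qed
  qed (use range \<mu>0 B alpha_nonneg prox_lip_nonneg[OF \<mu>0(1)] prox_dist_mono prox_dist_lipschitz
      prox_val_antimono prox_val_lipschitz in \<open>auto simp: B_def\<close>)
qed

lemma prox_dist_sq_le:
  assumes "0 < \<mu>" "\<mu> \<le> lam" "0 \<le> prox_val \<mu>"
  shows "(prox_dist \<mu>)\<^sup>2 \<le> 2 * \<mu> * real_of_ereal (f x)"
proof -
  have "(prox_dist \<mu>)\<^sup>2 \<le> 2 * \<mu> * (real_of_ereal (f x) - prox_val \<mu>)"
    using prox_val_dist_le_start[OF assms(1,2)] assms(1) by (simp add: field_simps)
  also have "\<dots> \<le> 2 * \<mu> * real_of_ereal (f x)" using assms by (intro mult_left_mono) auto
  finally show ?thesis .
qed

lemma prox_dist_le_phi_drop: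
  assumes K: "class_K r0 \<phi>"
    and KL: "\<forall>y. 0 < f y \<and> f y < ereal r0 \<longrightarrow> minnorm (frechet_subdiff (comp_K r0 \<phi> f) y) \<ge> 1"
    and val_lam: "0 < prox_val lam" and start: "real_of_ereal (f x) < r0"
  shows "prox_dist lam \<le> \<phi> (real_of_ereal (f x)) - \<phi> (prox_val lam)"
proof (rule field_le_epsilon)
  fix e :: real assume e: "0 < e"
  define fx where "fx = real_of_ereal (f x)"
  define \<mu>0 where "\<mu>0 = min lam (e\<^sup>2 / (2 * fx + 1))"
  have fx: "0 < fx" using prox_val_le_start[of lam] val_lam lam_pos unfolding fx_def by simp
  have \<mu>0: "0 < \<mu>0" "\<mu>0 \<le> lam" unfolding \<mu>0_def using lam_pos e fx by auto
  have val: "prox_val lam \<le> prox_val \<mu>0" "prox_val \<mu>0 \<le> fx"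
    using prox_val_antimono[of \<mu>0 lam] prox_val_le_start[OF \<mu>0] \<mu>0 unfolding fx_def by auto
  have "(prox_dist \<mu>0)\<^sup>2 \<le> 2 * \<mu>0 * fx" unfolding fx_def using prox_dist_sq_le[OF \<mu>0] val val_lam by simp
  also have "\<dots> \<le> 2 * (e\<^sup>2 / (2 * fx + 1)) * fx" unfolding \<mu>0_def using fx by (intro mult_right_mono) auto
  also have "\<dots> < e\<^sup>2" using fx e by (simp add: field_simps)
  finally have "prox_dist \<mu>0 < e" using e by (simp add: prox_dist_def power_less_imp_less_base)
  moreover have "\<phi> (prox_val \<mu>0) \<le> \<phi> fx" using class_K_mono[OF K] val val_lam start unfolding fx_def by simp
  ultimately show "prox_dist lam \<le> \<phi> (real_of_ereal (f x)) - \<phi> (prox_val lam) + e"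
    using prox_path_descent[OF K KL val_lam start \<mu>0] unfolding fx_def by simp
qed

end

theorem lemma3p16:
  fixes f :: "'a::{real_inner, complete_space} \<Rightarrow> ereal"
    and \<alpha> r0 lam :: real and \<phi> :: "real \<Rightarrow> real" and x :: 'a
  assumes "\<alpha> > 0" and "semiconvex \<alpha> f"
    and "r0 > 0" and "class_K r0 \<phi>"
    and "\<forall>y. 0 < f y \<and> f y < ereal r0 \<longrightarrow> minnorm (frechet_subdiff (comp_K r0 \<phi> f) y) \<ge> 1"
    and "0 < lam" and "lam < 1 / \<alpha>"
    and "0 < f x" and "f x < ereal r0"
    and "f (prox f lam x) > 0"
  shows "norm (prox f lam x - x)
           \<le> \<phi> (real_of_ereal (f x)) - \<phi> (real_of_ereal (f (prox f lam x)))"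
proof -
  interpret prox_path \<alpha> f x lam
    using assms(1,2,6-9) by unfold_locales (auto simp: field_simps)
  have "0 < prox_val lam"
    using assms(6,10) f_prox_pt[of lam] unfolding prox_pt_def by simp
  moreover have "real_of_ereal (f x) < r0"
    using assms(9) f_start by (cases "f x") auto
  ultimately show ?thesis using prox_dist_le_phi_drop[OF assms(4,5)]
    unfolding prox_dist_def prox_val_def prox_pt_def by blast
qed

end
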